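(* Let $\hat{\mathcal{A}}^\pi[\mathcal{D}^{\mathcal{K}}_{\sigma}]$ be an anchoring learning trace with asymptotic backbone $\{\hat\alpha_i\}_{i>\omega(\nu,\varsigma,\lambda)}$. - If $\{\hat\alpha_i\}$ is decreasing, then for all $i>\omega(\nu,\varsigma,\lambda)$, $$\hat{\mathcal{A}}^\pi_{i+1}[\mathcal{D}^{\mathcal{K}}_{\sigma}](\infty)\le\hat\alpha_i-\sum_{j\le i+1}\hat\rho_{i+1}(j).$$ - If $\{\hat\alpha_i\}$ is increasing, then for all $i>\omega(\nu,\varsigma,\lambda)$, $$\hat{\mathcal{A}}^\pi_{i+1}[\mathcal{D}^{\mathcal{K}}_{\sigma}](\infty)\ge\hat\alpha_i-\sum_{j\le i+1}\hat\rho_{i+1}(j).$$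
   Context: $\mathbb{N}=\{1,2,\dots\}$. Setting. $\mathcal{D}$ is a training data base, assumed independently and identically distributed. A learning scheme $\mathcal{D}^{\mathcal{K}}_{\sigma}=[\mathcal{K},\sigma,\{\mathcal{D}_i\}]$ consists of a nonempty kernel $\mathcal{K}\subsetneq\mathcal{D}$, a step function $\sigma:\mathbb{N}\to\mathbb{N}$, and $\mathcal{D}_1=\mathcal{K}$, $\mathcal{D}_i=\mathcal{D}_{i-1}\cup\mathcal{I}_i$, $\mathcal{I}_i\subset\mathcal{D}\setminus\mathcal{D}_{i-1}$, $|\mathcal{I}_i|=\sigma(i)$. The learning curve $\mathcal{A}_{\infty\infty}[\mathcal{D}^{\mathcal{K}}_{\sigma}]$ gives the accuracy of the studied system trained on the first $x$ items; the observations are $[x_i,\mathcal{A}_{\infty\infty}(x_i)]$ with $x_i=|\mathcal{D}_i|$. The learning curve is positive definite, strictly increasing, concave, upper bounded by $100$, with horizontal asymptote $y=\alpha_{\infty\infty}$. An accuracy pattern is a map $\pi:(\mathbb{R}^+)^n\to C^\infty(0,\infty)$ whose values are positive definite, concave and strictly increasing on $(0,\infty)$. For $\ell\ge3$, the learning trend $\mathcal{A}^\pi_\ell\in\pi$ fits $\{[x_i,\mathcal{A}_{\infty\infty}(x_i)]\}_{i=1}^\ell$. Fitting is a regression minimizing a weighting function of the residuals, and the residuals over all fitted points sum to zero. The learning trace is $\{\mathcal{A}^\pi_\ell\}$, with asymptotic backbone $\{\alpha_\ell\}$, where $y=\alpha_\ell$ is the asymptote of $\mathcal{A}^\pi_\ell$.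 Working level. Given $\nu\in(0,1)$, $\varsigma\in\mathbb{N}$ and $\lambda\in\mathbb{N}\cup\{0\}$, the working level $\omega(\nu,\varsigma,\lambda)$ is the smallest natural number $\omega$ with $\frac{\sqrt[\varsigma]{\nu}}{1-\nu}\ge\frac{|\alpha_{i+1}-\alpha_i|}{|\mathcal{D}_{i+1}|-|\mathcal{D}_i|}$ for all $i$ with $\omega\le i\le\omega+\lambda$. Anchoring. Given anchors $\hat{\mathcal{A}}^\pi_\ell(\infty)\in\mathbb{R}^+$ for $\ell>\omega(\nu,\varsigma,\lambda)$, the learning trend of level $\ell$ with anchor is a curve $\hat{\mathcal{A}}^\pi_\ell\in\pi$ fitting $\{[x_i,\mathcal{A}_{\infty\infty}(x_i)]\}_{i=1}^\ell\cup\{[\infty,\hat{\mathcal{A}}^\pi_\ell(\infty)]\}$, with asymptote $y=\hat\alpha_\ell$. Its residuals are $\hat\rho_\ell(i)=(\mathcal{A}_{\infty\infty}-\hat{\mathcal{A}}^\pi_\ell)(|\mathcal{D}_i|)$ and $\hat\rho_\ell(\infty)=\hat{\mathcal{A}}^\pi_\ell(\infty)-\hat\alpha_\ell$. When $\{\hat\alpha_\ell\}$ is positive definite and converges monotonically to $\alpha_{\infty\infty}$, the sequence $\{\hat{\mathcal{A}}^\pi_\ell\}_{\ell>\omega}$ is called an anchoring learning trace, with asymptotic backbone $\{\hat\alpha_\ell\}$. *)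

theory Defs
  imports "HOL-Analysis.Analysis"
begin

text \<open>Learning scheme: kernel K = D 1 (nonempty, finite, proper subset of the data base),
  D i = D (i-1) \<union> I i with I i a subset of the unseen data of cardinality sigma i.
  Indices start at 1; D 0 is irrelevant.\<close>
definition learning_scheme :: "'a set \<Rightarrow> (nat \<Rightarrow> nat) \<Rightarrow> (nat \<Rightarrow> 'a set) \<Rightarrow> bool" where
  "learning_scheme Dall \<sigma> D \<longleftrightarrow>
     D 1 \<noteq> {} \<and> finite (D 1) \<and> D 1 \<subset> Dall \<and> (\<forall>i. \<sigma> i \<ge> 1) \<and>
     (\<forall>i\<ge>2. \<exists>I. I \<subseteq> Dall - D (i - 1) \<and> card I = \<sigma> i \<and> finite I \<and> D i = D (i - 1) \<union> I)"

definition learning_curve :: "(real \<Rightarrow> real) \<Rightarrow> real \<Rightarrow> bool" where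
  "learning_curve A \<alpha>inf \<longleftrightarrow>
     (\<forall>x>0. A x > 0 \<and> A x \<le> 100) \<and> strict_mono_on {0<..} A \<and> concave_on {0<..} A \<and>
     (A \<longlongrightarrow> \<alpha>inf) at_top"

definition accuracy_pattern :: "('p \<Rightarrow> real \<Rightarrow> real) \<Rightarrow> bool" where
  "accuracy_pattern \<pi> \<longleftrightarrow>
     (\<forall>p. (\<forall>x>0. \<pi> p x > 0) \<and> strict_mono_on {0<..} (\<pi> p) \<and> concave_on {0<..} (\<pi> p) \<and>
          (\<forall>k. \<forall>x>0. ((deriv ^^ k) (\<pi> p)) differentiable (at x)))"

definition wl_cond :: "real \<Rightarrow> nat \<Rightarrow> nat \<Rightarrow> (nat \<Rightarrow> real) \<Rightarrow> (nat \<Rightarrow> real) \<Rightarrow> nat \<Rightarrow> bool" where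
  "wl_cond \<nu> vs lam \<alpha> x \<omega> \<longleftrightarrow> \<omega> \<ge> 1 \<and>
     (\<forall>i. \<omega> \<le> i \<and> i \<le> \<omega> + lam \<longrightarrow>
        root vs \<nu> / (1 - \<nu>) \<ge> \<bar>\<alpha> (i + 1) - \<alpha> i\<bar> / \<bar>x (i + 1) - x i\<bar>)"

definition working_level :: "real \<Rightarrow> nat \<Rightarrow> nat \<Rightarrow> (nat \<Rightarrow> real) \<Rightarrow> (nat \<Rightarrow> real) \<Rightarrow> nat" where
  "working_level \<nu> vs lam \<alpha> x = (LEAST \<omega>. wl_cond \<nu> vs lam \<alpha> x \<omega>)"

end

theory Submission
  imports Defs
begin

theorem theorem5:
  fixes Dall :: "'a set" and D :: "nat \<Rightarrow> 'a set" and \<sigma> :: "nat \<Rightarrow> nat"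
    and Acurve :: "real \<Rightarrow> real" and \<alpha>inf :: real
    and \<pi> :: "'p \<Rightarrow> real \<Rightarrow> real"
    and Atr :: "nat \<Rightarrow> real \<Rightarrow> real" and \<alpha> :: "nat \<Rightarrow> real"
    and Ahat :: "nat \<Rightarrow> real \<Rightarrow> real" and anchor :: "nat \<Rightarrow> real" and \<alpha>hat :: "nat \<Rightarrow> real"
    and \<nu> :: real and vs :: nat and lam :: nat
  defines "x \<equiv> (\<lambda>i. real (card (D i)))"
  defines "\<omega> \<equiv> working_level \<nu> vs lam \<alpha> x"
  defines "\<rho>hat \<equiv> (\<lambda>l j. Acurve (x j) - Ahat l (x j))"
  assumes scheme: "learning_scheme Dall \<sigma> D"
    and curve: "learning_curve Acurve \<alpha>inf"
    and pattern: "accuracy_pattern \<pi>"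
    \<comment> \<open>learning trace (unanchored): trends of level l \<ge> 3 with asymptotes alpha l,
        residuals over the fitted points summing to zero\<close>
    and trend_in: "\<And>l. l \<ge> 3 \<Longrightarrow> Atr l \<in> range \<pi>"
    and trend_asym: "\<And>l. l \<ge> 3 \<Longrightarrow> (Atr l \<longlongrightarrow> \<alpha> l) at_top"
    and trend_res: "\<And>l. l \<ge> 3 \<Longrightarrow> (\<Sum>j=1..l. Acurve (x j) - Atr l (x j)) = 0"
    and nu: "0 < \<nu>" "\<nu> < 1" and vs_pos: "vs \<ge> 1"
    and wl_exists: "\<exists>w. wl_cond \<nu> vs lam \<alpha> x w"
    \<comment> \<open>anchored trends of level l > omega, fitting points 1..l and [inf, anchor l]\<close>
    and anch_pos: "\<And>l. l > \<omega> \<Longrightarrow> anchor l > 0"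
    and anch_in: "\<And>l. l > \<omega> \<Longrightarrow> Ahat l \<in> range \<pi>"
    and anch_asym: "\<And>l. l > \<omega> \<Longrightarrow> (Ahat l \<longlongrightarrow> \<alpha>hat l) at_top"
    and anch_res: "\<And>l. l > \<omega> \<Longrightarrow>
          (\<Sum>j=1..l. \<rho>hat l j) + (anchor l - \<alpha>hat l) = 0"
    \<comment> \<open>anchoring learning trace: positive backbone converging monotonically to alpha_inf\<close>
    and backbone_pos: "\<And>l. l > \<omega> \<Longrightarrow> \<alpha>hat l > 0"
    and backbone_mono: "(\<forall>i>\<omega>. \<alpha>hat (Suc i) \<le> \<alpha>hat i) \<or> (\<forall>i>\<omega>. \<alpha>hat i \<le> \<alpha>hat (Suc i))"
    and backbone_lim: "(\<lambda>l. \<alpha>hat (l + Suc \<omega>)) \<longlonglongrightarrow> \<alpha>inf"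
  shows "((\<forall>i>\<omega>. \<alpha>hat (Suc i) \<le> \<alpha>hat i) \<longrightarrow>
            (\<forall>i>\<omega>. anchor (i + 1) \<le> \<alpha>hat i - (\<Sum>j=1..i+1. \<rho>hat (i + 1) j)))
       \<and> ((\<forall>i>\<omega>. \<alpha>hat i \<le> \<alpha>hat (Suc i)) \<longrightarrow>
            (\<forall>i>\<omega>. anchor (i + 1) \<ge> \<alpha>hat i - (\<Sum>j=1..i+1. \<rho>hat (i + 1) j)))"
proof -
  have anchor_eq: "anchor (i + 1) = \<alpha>hat (i + 1) - (\<Sum>j=1..i+1. \<rho>hat (i + 1) j)"
    if "i > \<omega>" for i
    using anch_res[of "i + 1"] that by linarith
  show ?thesis
  proof (intro conjI impI allI)
    fix i
    assume "\<forall>i>\<omega>. \<alpha>hat (Suc i) \<le> \<alpha>hat i" and "i > \<omega>"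
    then show "anchor (i + 1) \<le> \<alpha>hat i - (\<Sum>j=1..i+1. \<rho>hat (i + 1) j)"
      using anchor_eq by simp
  next
    fix i
    assume "\<forall>i>\<omega>. \<alpha>hat i \<le> \<alpha>hat (Suc i)" and "i > \<omega>"
    then show "anchor (i + 1) \<ge> \<alpha>hat i - (\<Sum>j=1..i+1. \<rho>hat (i + 1) j)"
      using anchor_eq by simp
  qed
qed

end
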